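(* Let $G$ be a topological group, $\mathcal{Y}$ a Hausdorff locally convex space, and $\pi\colon G\to\mathrm{End}(\mathcal{Y})$ a representation such that the action $(g,y)\mapsto\pi(g)y$, $G\times\mathcal{Y}\to\mathcal{Y}$, is continuous and there is a neighborhood $V$ of $\mathbf{1}\in G$ with $\pi(V)$ equicontinuous on $\mathcal{Y}$. Then $\mathcal{D}^1_{d\pi}=\mathcal{D}^{1,\mathrm{lin}}_{d\pi}$. If moreover (1) $\mathfrak{L}(G)$ is endowed with a Baire topology that is stronger than the compact-open topology; (2) for every $X_1,X_2\in\mathfrak{L}(G)$ there exists $X\in\mathfrak{L}(G)$ with $X=X_1+X_2$ (in the sense below), and $\mathfrak{L}(G)$, with this addition and scalar multiplication $(tX)(s)=X(ts)$, is a topological vector space for the topology in (1); (3) $\mathcal{Y}$ is metrizable; then also $\mathcal{D}^1_{d\pi}=\mathcal{D}^{1,\mathrm{cont}}_{d\pi}$, where continuity in the definition of $\mathcal{D}^{1,\mathrm{cont}}_{d\pi}$ refers to the topology on $\mathfrak{L}(G)$ from (1).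
   Context: All topological groups are Hausdorff; $\mathrm{End}(\mathcal{Y})$ is the algebra of continuous linear operators on $\mathcal{Y}$. $\mathfrak{L}(G)$ is the set of continuous homomorphisms $(\mathbb{R},+)\to G$; the compact-open topology on it is uniform convergence on compact subsets of $\mathbb{R}$. For $X,X_1,X_2\in\mathfrak{L}(G)$ one writes $X=X_1+X_2$ if $X(t)=\lim_{n\to\infty}(X_1(t/n)X_2(t/n))^n$ for all $t\in\mathbb{R}$, uniformly on compact subsets of $\mathbb{R}$. For $X\in\mathfrak{L}(G)$, $d\pi(X)$ is the infinitesimal generator of $t\mapsto\pi(X(t))$, with domain $\mathcal{D}(d\pi(X))$ the set of $y$ for which $d\pi(X)y:=\lim_{t\to0}\frac{\pi(X(t))y-y}{t}$ exists. Define $\mathcal{D}^1_{d\pi}=\bigcap_{X\in\mathfrak{L}(G)}\mathcal{D}(d\pi(X))$; $\mathcal{D}^{1,\mathrm{cont}}_{d\pi}=\{y\in\mathcal{D}^1_{d\pi}\mid X\mapsto d\pi(X)y \text{ is continuous } \mathfrak{L}(G)\to\mathcal{Y}\}$; $\mathcal{D}^{1,\mathrm{lin}}_{d\pi}=\{y\in\mathcal{D}^1_{d\pi}\mid d\pi(X)y=d\pi(X_1)y+d\pi(X_2)y \text{ whenever } X,X_1,X_2\in\mathfrak{L}(G),\ X=X_1+X_2\}$. *)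

theory Defs
  imports "HOL-Analysis.Analysis" "HOL-Algebra.Group"
begin

definition topological_group :: "('g, 'm) monoid_scheme \<Rightarrow> 'g topology \<Rightarrow> bool" where
  "topological_group G TG \<longleftrightarrow>
     group G \<and> topspace TG = carrier G \<and> Hausdorff_space TG \<and>
     continuous_map (prod_topology TG TG) TG (\<lambda>(g, h). g \<otimes>\<^bsub>G\<^esub> h) \<and>
     continuous_map TG TG (\<lambda>g. inv\<^bsub>G\<^esub> g)"

definition Lie_set :: "('g, 'm) monoid_scheme \<Rightarrow> 'g topology \<Rightarrow> (real \<Rightarrow> 'g) set" where
  "Lie_set G TG = {X. continuous_map euclideanreal TG X \<and>
                      (\<forall>s t. X (s + t) = X s \<otimes>\<^bsub>G\<^esub> X t)}"

text \<open>X = X1 + X2: X(t) = lim_n (X1(t/n) X2(t/n))^n, uniformly on compact subsets of R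
(uniform convergence in the group uniformity: for every neighbourhood U of 1,
eventually X(t)^-1 (X1(t/n)X2(t/n))^n lies in U for all t in K).\<close>

definition Lie_sum :: "('g, 'm) monoid_scheme \<Rightarrow> 'g topology \<Rightarrow>
     (real \<Rightarrow> 'g) \<Rightarrow> (real \<Rightarrow> 'g) \<Rightarrow> (real \<Rightarrow> 'g) \<Rightarrow> bool" where
  "Lie_sum G TG X X1 X2 \<longleftrightarrow>
     (\<forall>K::real set. compact K \<longrightarrow>
        (\<forall>U. openin TG U \<and> \<one>\<^bsub>G\<^esub> \<in> U \<longrightarrow>
           (\<forall>\<^sub>F n in sequentially. \<forall>t\<in>K.
              inv\<^bsub>G\<^esub> (X t) \<otimes>\<^bsub>G\<^esub> ((X1 (t / real n) \<otimes>\<^bsub>G\<^esub> X2 (t / real n)) [^]\<^bsub>G\<^esub> n) \<in> U)))"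

text \<open>The (unique, if it exists) sum in L(G), and scalar multiplication (tX)(s) = X(ts).\<close>

definition Lie_add :: "('g, 'm) monoid_scheme \<Rightarrow> 'g topology \<Rightarrow>
     (real \<Rightarrow> 'g) \<Rightarrow> (real \<Rightarrow> 'g) \<Rightarrow> (real \<Rightarrow> 'g)" where
  "Lie_add G TG X1 X2 = (THE X. X \<in> Lie_set G TG \<and> Lie_sum G TG X X1 X2)"

definition Lie_smult :: "real \<Rightarrow> (real \<Rightarrow> 'g) \<Rightarrow> (real \<Rightarrow> 'g)" where
  "Lie_smult t X = (\<lambda>s. X (t * s))"

definition topological_vector_space_type :: "'y::{real_vector, t2_space} itself \<Rightarrow> bool" where
  "topological_vector_space_type _ \<longleftrightarrow>
     continuous_on UNIV (\<lambda>(x::'y, y). x + y) \<and>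
     continuous_on UNIV (\<lambda>(a::real, x::'y). a *\<^sub>R x)"

definition locally_convex_type :: "'y::{real_vector, t2_space} itself \<Rightarrow> bool" where
  "locally_convex_type _ \<longleftrightarrow>
     (\<forall>W::'y set. open W \<and> 0 \<in> W \<longrightarrow> (\<exists>U. open U \<and> convex U \<and> 0 \<in> U \<and> U \<subseteq> W))"

definition equicontinuous_family :: "('y::{real_vector, t2_space} \<Rightarrow> 'y) set \<Rightarrow> bool" where
  "equicontinuous_family F \<longleftrightarrow>
     (\<forall>W. open W \<and> 0 \<in> W \<longrightarrow> (\<exists>U. open U \<and> 0 \<in> U \<and> (\<forall>A\<in>F. A ` U \<subseteq> W)))"

definition continuous_representation ::
  "('g, 'm) monoid_scheme \<Rightarrow> 'g topology \<Rightarrow> ('g \<Rightarrow> 'y::{real_vector, t2_space} \<Rightarrow> 'y) \<Rightarrow> bool" where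
  "continuous_representation G TG \<pi> \<longleftrightarrow>
     (\<forall>g\<in>carrier G. linear (\<pi> g) \<and> continuous_on UNIV (\<pi> g)) \<and>
     \<pi> \<one>\<^bsub>G\<^esub> = id \<and>
     (\<forall>g\<in>carrier G. \<forall>h\<in>carrier G. \<pi> (g \<otimes>\<^bsub>G\<^esub> h) = \<pi> g \<circ> \<pi> h) \<and>
     continuous_map (prod_topology TG euclidean) euclidean (\<lambda>(g, y). \<pi> g y)"

definition diff_quot :: "('g \<Rightarrow> 'y::real_vector \<Rightarrow> 'y) \<Rightarrow> (real \<Rightarrow> 'g) \<Rightarrow> 'y \<Rightarrow> real \<Rightarrow> 'y" where
  "diff_quot \<pi> X y t = inverse t *\<^sub>R (\<pi> (X t) y - y)"

definition gen_domain :: "('g \<Rightarrow> 'y::{real_vector, t2_space} \<Rightarrow> 'y) \<Rightarrow> (real \<Rightarrow> 'g) \<Rightarrow> 'y set" where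
  "gen_domain \<pi> X = {y. \<exists>v. (diff_quot \<pi> X y \<longlongrightarrow> v) (at 0)}"

definition dpi :: "('g \<Rightarrow> 'y::{real_vector, t2_space} \<Rightarrow> 'y) \<Rightarrow> (real \<Rightarrow> 'g) \<Rightarrow> 'y \<Rightarrow> 'y" where
  "dpi \<pi> X y = Lim (at 0) (diff_quot \<pi> X y)"

definition D1 :: "('g, 'm) monoid_scheme \<Rightarrow> 'g topology \<Rightarrow> ('g \<Rightarrow> 'y::{real_vector, t2_space} \<Rightarrow> 'y) \<Rightarrow> 'y set" where
  "D1 G TG \<pi> = (\<Inter>X\<in>Lie_set G TG. gen_domain \<pi> X)"

definition D1_lin :: "('g, 'm) monoid_scheme \<Rightarrow> 'g topology \<Rightarrow> ('g \<Rightarrow> 'y::{real_vector, t2_space} \<Rightarrow> 'y) \<Rightarrow> 'y set" where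
  "D1_lin G TG \<pi> = {y \<in> D1 G TG \<pi>. \<forall>X\<in>Lie_set G TG. \<forall>X1\<in>Lie_set G TG. \<forall>X2\<in>Lie_set G TG.
        Lie_sum G TG X X1 X2 \<longrightarrow> dpi \<pi> X y = dpi \<pi> X1 y + dpi \<pi> X2 y}"

definition D1_cont :: "('g, 'm) monoid_scheme \<Rightarrow> 'g topology \<Rightarrow> (real \<Rightarrow> 'g) topology \<Rightarrow>
     ('g \<Rightarrow> 'y::{real_vector, t2_space} \<Rightarrow> 'y) \<Rightarrow> 'y set" where
  "D1_cont G TG TL \<pi> = {y \<in> D1 G TG \<pi>. continuous_map TL euclidean (\<lambda>X. dpi \<pi> X y)}"

definition Baire_space :: "'a topology \<Rightarrow> bool" where
  "Baire_space T \<longleftrightarrow>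
     (\<forall>\<U>. countable \<U> \<and> (\<forall>U\<in>\<U>. openin T U \<and> T closure_of U = topspace T) \<longrightarrow>
          T closure_of (topspace T \<inter> \<Inter>\<U>) = topspace T)"

text \<open>TL is stronger (finer) than the compact-open topology on L(G): every subbasic
compact-open set {X. X(K) \<subseteq> U} (K compact, U open) is open.\<close>

definition finer_than_compact_open :: "('g, 'm) monoid_scheme \<Rightarrow> 'g topology \<Rightarrow> (real \<Rightarrow> 'g) topology \<Rightarrow> bool" where
  "finer_than_compact_open G TG TL \<longleftrightarrow>
     (\<forall>K U. compact K \<and> openin TG U \<longrightarrow> openin TL {X \<in> Lie_set G TG. X ` K \<subseteq> U})"

definition Lie_tvs :: "('g, 'm) monoid_scheme \<Rightarrow> 'g topology \<Rightarrow> (real \<Rightarrow> 'g) topology \<Rightarrow> bool" where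
  "Lie_tvs G TG TL \<longleftrightarrow>
    (let L = Lie_set G TG; add = Lie_add G TG; z = (\<lambda>_::real. \<one>\<^bsub>G\<^esub>) in
     topspace TL = L \<and>
     (\<forall>X\<in>L. \<forall>Y\<in>L. add X Y \<in> L) \<and>
     (\<forall>a. \<forall>X\<in>L. Lie_smult a X \<in> L) \<and>
     (\<forall>X\<in>L. \<forall>Y\<in>L. \<forall>Z\<in>L. add (add X Y) Z = add X (add Y Z)) \<and>
     (\<forall>X\<in>L. \<forall>Y\<in>L. add X Y = add Y X) \<and>
     (\<forall>X\<in>L. add z X = X) \<and>
     (\<forall>X\<in>L. add X (Lie_smult (-1) X) = z) \<and>
     (\<forall>a b. \<forall>X\<in>L. Lie_smult (a + b) X = add (Lie_smult a X) (Lie_smult b X)) \<and>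
     (\<forall>a. \<forall>X\<in>L. \<forall>Y\<in>L. Lie_smult a (add X Y) = add (Lie_smult a X) (Lie_smult a Y)) \<and>
     continuous_map (prod_topology TL TL) TL (\<lambda>(X, Y). add X Y) \<and>
     continuous_map (prod_topology euclideanreal TL) TL (\<lambda>(a, X). Lie_smult a X))"

end

theory Submission
  imports Defs
begin

text \<open>
  Additivity: put \<open>Z r = X\<^sub>1 r X\<^sub>2 r\<close> and \<open>w = d\<pi>(X\<^sub>1)y + d\<pi>(X\<^sub>2)y\<close>. Telescoping \<open>\<pi>(Z(t/n)\<^sup>n)y - y\<close>
  shows that its difference quotient at \<open>t\<close> is the mean of the vectors \<open>\<pi>(Z(t/n)\<^sup>k) v\<^sub>n\<close>, \<open>k < n\<close>,
  where \<open>v\<^sub>n\<close>, the difference quotient of \<open>Z\<close> at \<open>t/n\<close>, is close to \<open>w\<close>. For small \<open>t\<close> each \<open>Z(t/n)\<^sup>k\<close> is a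
  product of two elements close to \<open>\<one>\<close>: for \<open>k\<close> below a fixed bound by continuity of \<open>Z\<close>, and
  otherwise as \<open>X(kt/n) \<cdot> X(kt/n)\<inverse> Z(t/n)\<^sup>k\<close> by the uniform convergence defining \<open>X = X\<^sub>1 + X\<^sub>2\<close>. So
  equicontinuity keeps all these vectors in \<open>w + W\<close> for a convex neighbourhood \<open>W\<close> of \<open>0\<close>.
  As \<open>n \<rightarrow> \<infinity>\<close> the mean tends to the difference quotient of \<open>X\<close> at \<open>t\<close>; hence \<open>d\<pi>(X)y\<close> lies
  in \<open>w + closure W\<close> for every such \<open>W\<close>, and local convexity gives \<open>d\<pi>(X)y = w\<close>.

  Continuity: \<open>X \<mapsto> d\<pi>(X)y\<close> is the pointwise limit of the continuous maps
  \<open>X \<mapsto> (n+1)(\<pi>(X(1/(n+1)))y - y)\<close>, so by the Baire property it has small oscillation on a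
  nonempty open set; being additive on the topological vector space \<open>L(G)\<close>, it is carried there
  from any point by a translation.
\<close>

section \<open>Topological vector spaces\<close>

context
  assumes tvs: "topological_vector_space_type TYPE('y::{real_vector,t2_space})"
begin

lemma tvs_tendsto_add:
  fixes f g :: "'b \<Rightarrow> 'y"
  assumes "(f \<longlongrightarrow> a) F" "(g \<longlongrightarrow> b) F"
  shows "((\<lambda>x. f x + g x) \<longlongrightarrow> a + b) F"
proof -
  have "isCont (\<lambda>(x::'y, y). x + y) (a, b)"
    using tvs by (simp add: topological_vector_space_type_def continuous_on_eq_continuous_at)
  from isCont_tendsto_compose[OF this tendsto_Pair[OF assms]] show ?thesis by simp
qed

lemma tvs_tendsto_scaleR:
  fixes g :: "'b \<Rightarrow> 'y"
  assumes "(f \<longlongrightarrow> a) F" "(g \<longlongrightarrow> b) F"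
  shows "((\<lambda>x. f x *\<^sub>R g x) \<longlongrightarrow> a *\<^sub>R b) F"
proof -
  have "isCont (\<lambda>(a::real, x::'y). a *\<^sub>R x) (a, b)"
    using tvs by (simp add: topological_vector_space_type_def continuous_on_eq_continuous_at)
  from isCont_tendsto_compose[OF this tendsto_Pair[OF assms]] show ?thesis by simp
qed

lemma tvs_tendsto_diff:
  fixes f g :: "'b \<Rightarrow> 'y"
  assumes "(f \<longlongrightarrow> a) F" "(g \<longlongrightarrow> b) F"
  shows "((\<lambda>x. f x - g x) \<longlongrightarrow> a - b) F"
  using tvs_tendsto_add[OF assms(1) tvs_tendsto_scaleR[OF tendsto_const assms(2), of "-1"]]
  by simp

lemma tvs_continuous_map_affine:
  "continuous_map euclidean euclidean (\<lambda>v::'y. a *\<^sub>R (v - c))"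
  unfolding continuous_map_iff_continuous2 continuous_on_def
  by (auto intro!: tvs_tendsto_scaleR tvs_tendsto_diff tendsto_ident_at)

lemma tvs_open_vimage_affine:
  assumes "open (A::'y set)"
  shows "open {v. a *\<^sub>R (v - c) \<in> A}"
  using openin_continuous_map_preimage[OF tvs_continuous_map_affine, of A a c] assms by simp

lemma tvs_eventually_diff_in:
  fixes f :: "'b \<Rightarrow> 'y"
  assumes "(f \<longlongrightarrow> a) F" "open W" "0 \<in> W"
  shows "eventually (\<lambda>x. f x - a \<in> W) F"
  using tvs_tendsto_diff[OF assms(1) tendsto_const, of a] assms(2,3) by (simp add: tendsto_def)

lemma tvs_zero_nhd_half:
  assumes "open (A::'y set)" "0 \<in> A"
  obtains B where "open B" "0 \<in> B" "\<And>u v. u \<in> B \<Longrightarrow> v \<in> B \<Longrightarrow> u + v \<in> A \<and> u - v \<in> A"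
proof -
  have proj: "(fst \<longlongrightarrow> 0) (nhds (0::'y, 0::'y))" "(snd \<longlongrightarrow> 0) (nhds (0::'y, 0::'y))"
    using tendsto_fst[OF filterlim_ident, of "(0::'y, 0::'y)"]
      tendsto_snd[OF filterlim_ident, of "(0::'y, 0::'y)"] by simp_all
  have "((\<lambda>p. fst p + snd p) \<longlongrightarrow> 0) (nhds (0::'y, 0::'y))"
    "((\<lambda>p. fst p - snd p) \<longlongrightarrow> 0) (nhds (0::'y, 0::'y))"
    using tvs_tendsto_add[OF proj] tvs_tendsto_diff[OF proj] by simp_all
  then have "eventually (\<lambda>p. fst p + snd p \<in> A \<and> fst p - snd p \<in> A) (nhds (0::'y, 0::'y))"
    using assms by (auto simp: tendsto_def eventually_conj)
  then obtain P Q where P: "eventually P (nhds 0)" and Q: "eventually Q (nhds 0)"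
      and PQ: "\<And>u v. P u \<Longrightarrow> Q v \<Longrightarrow> u + v \<in> A \<and> u - v \<in> A"
    unfolding nhds_prod eventually_prod_filter by auto
  have "eventually (\<lambda>u. P u \<and> Q u) (nhds (0::'y))" using P Q by (rule eventually_conj)
  then obtain B where "open B" "0 \<in> B" "\<And>u. u \<in> B \<Longrightarrow> P u \<and> Q u"
    unfolding eventually_nhds by blast
  with PQ show ?thesis using that by blast
qed

lemma tvs_tendsto_tail_close:
  fixes f :: "nat \<Rightarrow> 'y"
  assumes "f \<longlonglongrightarrow> a" "open B" "0 \<in> B"
  obtains N where "\<And>m. m \<ge> N \<Longrightarrow> f m - f N \<in> B"
proof -
  obtain C where C: "open C" "0 \<in> C" "\<And>u v. u \<in> C \<Longrightarrow> v \<in> C \<Longrightarrow> u + v \<in> B \<and> u - v \<in> B"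
    using tvs_zero_nhd_half[OF assms(2,3)] by blast
  obtain N where N: "\<And>m. m \<ge> N \<Longrightarrow> f m - a \<in> C"
    using tvs_eventually_diff_in[OF assms(1) C(1,2)] unfolding eventually_sequentially by blast
  have "f m - f N \<in> B" if "m \<ge> N" for m
    using C(3)[OF N[OF that] N[of N]] by simp
  then show ?thesis using that by blast
qed

lemma tvs_closure_subset_sum:
  assumes "open (B::'y set)" "0 \<in> B" "x \<in> closure B"
  obtains u v where "u \<in> B" "v \<in> B" "x = u + v"
proof -
  have "open {q. (-1) *\<^sub>R (q - x) \<in> B}" by (rule tvs_open_vimage_affine[OF assms(1)])
  moreover have "x \<in> {q. (-1) *\<^sub>R (q - x) \<in> B}" using assms(2) by simp
  ultimately obtain q where "q \<in> B" "(-1) *\<^sub>R (q - x) \<in> B"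
    using assms(3) open_Int_closure_eq_empty by blast
  then show ?thesis using that[of q "x - q"] by simp
qed

lemma tvs_zero_nhd_closure:
  assumes "open (A::'y set)" "0 \<in> A"
  obtains B where "open B" "0 \<in> B" "closure B \<subseteq> A"
proof -
  obtain B where B: "open B" "0 \<in> B" "\<And>u v. u \<in> B \<Longrightarrow> v \<in> B \<Longrightarrow> u + v \<in> A \<and> u - v \<in> A"
    using tvs_zero_nhd_half[OF assms] by blast
  have "closure B \<subseteq> A"
  proof
    fix x assume "x \<in> closure B"
    then obtain u v where "u \<in> B" "v \<in> B" "x = u + v" using tvs_closure_subset_sum B(1,2) by blast
    then show "x \<in> A" using B(3) by blast
  qed
  with B(1,2) show ?thesis using that by blast
qed

lemma tvs_eq_zero_if_in_closure_convex_nhds: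
  assumes lc: "locally_convex_type TYPE('y)"
    and x: "\<And>W. open W \<Longrightarrow> convex W \<Longrightarrow> 0 \<in> W \<Longrightarrow> (x::'y) \<in> closure W"
  shows "x = 0"
proof (rule ccontr)
  assume "x \<noteq> 0"
  then obtain A where "open A" "0 \<in> A" "x \<notin> A" using t1_space[of 0 x] by metis
  moreover obtain B where "open B" "0 \<in> B" "closure B \<subseteq> A"
    using tvs_zero_nhd_closure[OF \<open>open A\<close> \<open>0 \<in> A\<close>] by blast
  moreover obtain W where "open W" "convex W" "0 \<in> W" "W \<subseteq> B"
    using lc \<open>open B\<close> \<open>0 \<in> B\<close> unfolding locally_convex_type_def by meson
  ultimately show False using x closure_mono by blast
qed

lemma tvs_continuous_map_diff:
  fixes f g :: "'a \<Rightarrow> 'y"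
  assumes "continuous_map T euclidean f" "continuous_map T euclidean g"
  shows "continuous_map T euclidean (\<lambda>x. f x - g x)"
proof -
  have "continuous_on UNIV (\<lambda>p::'y \<times> 'y. fst p - snd p)"
    unfolding continuous_on_def
    using tvs_tendsto_diff[OF tendsto_fst[OF tendsto_ident_at] tendsto_snd[OF tendsto_ident_at]]
    by simp
  then have "continuous_map (prod_topology euclidean euclidean) euclidean (\<lambda>p::'y \<times> 'y. fst p - snd p)"
    by simp
  from continuous_map_compose[OF continuous_map_pairedI[OF assms] this] show ?thesis
    by (simp add: o_def)
qed

end

section \<open>One-parameter subgroups\<close>

lemma topological_group_group: "topological_group G TG \<Longrightarrow> group G"
  by (simp add: topological_group_def)

lemma topspace_topological_group: "topological_group G TG \<Longrightarrow> topspace TG = carrier G"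
  by (simp add: topological_group_def)

lemma continuous_map_topological_group_mult:
  assumes "topological_group G TG" "continuous_map T TG f" "continuous_map T TG g"
  shows "continuous_map T TG (\<lambda>x. f x \<otimes>\<^bsub>G\<^esub> g x)"
proof -
  have "continuous_map (prod_topology TG TG) TG (\<lambda>(g, h). g \<otimes>\<^bsub>G\<^esub> h)"
    using assms(1) unfolding topological_group_def by blast
  from continuous_map_compose[OF continuous_map_pairedI[OF assms(2,3)] this]
  show ?thesis by (simp add: o_def)
qed

lemma continuous_map_topological_group_pow:
  assumes "topological_group G TG" "continuous_map T TG f"
  shows "continuous_map T TG (\<lambda>x. f x [^]\<^bsub>G\<^esub> (k::nat))"
proof (induction k)
  case 0
  have "\<one>\<^bsub>G\<^esub> \<in> topspace TG"
    using assms(1) unfolding topological_group_def by (simp add: group.is_monoid monoid.one_closed)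
  then show ?case by simp
next
  case (Suc k)
  then show ?case using continuous_map_topological_group_mult[OF assms(1) Suc assms(2)] by simp
qed

lemma continuous_map_Lie_set: "X \<in> Lie_set G TG \<Longrightarrow> continuous_map euclideanreal TG X"
  by (simp add: Lie_set_def)

lemma Lie_set_carrier: "topological_group G TG \<Longrightarrow> X \<in> Lie_set G TG \<Longrightarrow> X t \<in> carrier G"
  unfolding topological_group_def Lie_set_def continuous_map_def by auto

lemma Lie_set_zero:
  assumes "topological_group G TG" "X \<in> Lie_set G TG"
  shows "X 0 = \<one>\<^bsub>G\<^esub>"
proof -
  interpret group G using assms(1) by (rule topological_group_group)
  have "X (0 + 0) = X 0 \<otimes>\<^bsub>G\<^esub> X 0" using assms(2) unfolding Lie_set_def by blast
  then have "X 0 = X 0 \<otimes>\<^bsub>G\<^esub> X 0" by simp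
  then show ?thesis using Lie_set_carrier[OF assms] by (metis l_cancel_one')
qed

lemma Lie_sum_limitin:
  assumes "topological_group G TG" "Lie_sum G TG X X1 X2"
  shows "limitin TG (\<lambda>n. inv\<^bsub>G\<^esub> (X t) \<otimes>\<^bsub>G\<^esub> ((X1 (t / real n) \<otimes>\<^bsub>G\<^esub> X2 (t / real n)) [^]\<^bsub>G\<^esub> n))
           \<one>\<^bsub>G\<^esub> sequentially"
  unfolding limitin_def
proof (intro conjI allI impI)
  show "\<one>\<^bsub>G\<^esub> \<in> topspace TG"
    using assms(1) unfolding topological_group_def by (simp add: group.is_monoid monoid.one_closed)
  fix U assume "openin TG U \<and> \<one>\<^bsub>G\<^esub> \<in> U"
  from assms(2)[unfolded Lie_sum_def, rule_format, OF compact_sing this]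
  have "\<forall>\<^sub>F n in sequentially. \<forall>s\<in>{t}.
      inv\<^bsub>G\<^esub> (X s) \<otimes>\<^bsub>G\<^esub> ((X1 (s / real n) \<otimes>\<^bsub>G\<^esub> X2 (s / real n)) [^]\<^bsub>G\<^esub> n) \<in> U" .
  then show "\<forall>\<^sub>F n in sequentially.
      inv\<^bsub>G\<^esub> (X t) \<otimes>\<^bsub>G\<^esub> ((X1 (t / real n) \<otimes>\<^bsub>G\<^esub> X2 (t / real n)) [^]\<^bsub>G\<^esub> n) \<in> U"
    by simp
qed

lemma Lie_sum_unique:
  assumes tg: "topological_group G TG" and L: "X \<in> Lie_set G TG" "X' \<in> Lie_set G TG"
    and X1: "X1 \<in> Lie_set G TG" and X2: "X2 \<in> Lie_set G TG"
    and sum: "Lie_sum G TG X X1 X2" "Lie_sum G TG X' X1 X2"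
  shows "X = X'"
proof
  fix t
  interpret group G using tg by (rule topological_group_group)
  have inv: "continuous_map TG TG (\<lambda>g. inv\<^bsub>G\<^esub> g)" and H: "Hausdorff_space TG"
    using tg unfolding topological_group_def by blast+
  define z where "z n = (X1 (t / real n) \<otimes>\<^bsub>G\<^esub> X2 (t / real n)) [^]\<^bsub>G\<^esub> (n::nat)" for n
  have zc: "z n \<in> carrier G" for n
    unfolding z_def using Lie_set_carrier[OF tg] X1 X2 by (intro nat_pow_closed m_closed)
  have a: "X t \<in> carrier G" "X' t \<in> carrier G" using Lie_set_carrier[OF tg] L by blast+
  have cm: "continuous_map (prod_topology TG TG) TG (\<lambda>p. fst p \<otimes>\<^bsub>G\<^esub> inv\<^bsub>G\<^esub> (snd p))"
    using continuous_map_topological_group_mult[OF tg continuous_map_fst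
        continuous_map_compose[OF continuous_map_snd inv]] by (simp add: o_def)
  have "limitin (prod_topology TG TG)
      (\<lambda>n. (inv\<^bsub>G\<^esub> (X t) \<otimes>\<^bsub>G\<^esub> z n, inv\<^bsub>G\<^esub> (X' t) \<otimes>\<^bsub>G\<^esub> z n)) (\<one>\<^bsub>G\<^esub>, \<one>\<^bsub>G\<^esub>) sequentially"
    unfolding limitin_pairwise z_def using Lie_sum_limitin[OF tg] sum by (simp add: o_def)
  from continuous_map_limit[OF cm this]
  have "limitin TG (\<lambda>n. (inv\<^bsub>G\<^esub> (X t) \<otimes>\<^bsub>G\<^esub> z n) \<otimes>\<^bsub>G\<^esub> inv\<^bsub>G\<^esub> (inv\<^bsub>G\<^esub> (X' t) \<otimes>\<^bsub>G\<^esub> z n))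
      \<one>\<^bsub>G\<^esub> sequentially"
    by (simp add: o_def)
  moreover have "(inv\<^bsub>G\<^esub> (X t) \<otimes>\<^bsub>G\<^esub> z n) \<otimes>\<^bsub>G\<^esub> inv\<^bsub>G\<^esub> (inv\<^bsub>G\<^esub> (X' t) \<otimes>\<^bsub>G\<^esub> z n)
      = inv\<^bsub>G\<^esub> (X t) \<otimes>\<^bsub>G\<^esub> X' t" for n
    using a zc[of n] by (simp add: inv_mult_group m_assoc) (simp add: m_assoc[symmetric])
  ultimately have lim: "limitin TG (\<lambda>n. inv\<^bsub>G\<^esub> (X t) \<otimes>\<^bsub>G\<^esub> X' t) \<one>\<^bsub>G\<^esub> sequentially"
    by simp
  have "inv\<^bsub>G\<^esub> (X t) \<otimes>\<^bsub>G\<^esub> X' t = \<one>\<^bsub>G\<^esub>"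
    using limitin_Hausdorff_unique[OF _ lim _ H] a topspace_topological_group[OF tg] by simp
  then have "inv\<^bsub>G\<^esub> (X' t) = inv\<^bsub>G\<^esub> (X t)" using a by (intro inv_equality) auto
  then show "X t = X' t" using a by (metis inv_inv)
qed

lemma Lie_add:
  assumes "topological_group G TG" "X1 \<in> Lie_set G TG" "X2 \<in> Lie_set G TG"
    and "\<exists>X\<in>Lie_set G TG. Lie_sum G TG X X1 X2"
  shows "Lie_add G TG X1 X2 \<in> Lie_set G TG" "Lie_sum G TG (Lie_add G TG X1 X2) X1 X2"
proof -
  have "\<exists>!X. X \<in> Lie_set G TG \<and> Lie_sum G TG X X1 X2"
    using assms Lie_sum_unique[OF assms(1) _ _ assms(2,3)] by blast
  from theI'[OF this] show "Lie_add G TG X1 X2 \<in> Lie_set G TG" "Lie_sum G TG (Lie_add G TG X1 X2) X1 X2"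
    unfolding Lie_add_def by blast+
qed

lemma Lie_sum_pow_factor:
  assumes tg: "topological_group G TG"
    and L: "X \<in> Lie_set G TG" "X1 \<in> Lie_set G TG" "X2 \<in> Lie_set G TG"
    and sum: "Lie_sum G TG X X1 X2"
    and P: "openin TG P" "\<one>\<^bsub>G\<^esub> \<in> P" and Q: "openin TG Q" "\<one>\<^bsub>G\<^esub> \<in> Q"
  obtains \<delta> where "\<delta> > 0"
    "\<And>t n k. 0 \<le> t \<Longrightarrow> t < \<delta> \<Longrightarrow> k \<le> (n::nat) \<Longrightarrow>
       \<exists>p\<in>P. \<exists>q\<in>Q. (X1 (t / real n) \<otimes>\<^bsub>G\<^esub> X2 (t / real n)) [^]\<^bsub>G\<^esub> k = p \<otimes>\<^bsub>G\<^esub> q"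
proof -
  interpret group G using tg by (rule topological_group_group)
  define Z where "Z r = X1 r \<otimes>\<^bsub>G\<^esub> X2 r" for r
  have Zc: "Z r \<in> carrier G" for r unfolding Z_def using Lie_set_carrier[OF tg] L by blast
  have Xc: "X s \<in> carrier G" for s using Lie_set_carrier[OF tg L(1)] .
  have Zcont: "continuous_map euclideanreal TG Z"
    unfolding Z_def[abs_def]
    using continuous_map_topological_group_mult[OF tg continuous_map_Lie_set[OF L(2)]
        continuous_map_Lie_set[OF L(3)]] .
  have Z0: "Z 0 = \<one>\<^bsub>G\<^esub>" unfolding Z_def using Lie_set_zero[OF tg L(2)] Lie_set_zero[OF tg L(3)] by simp
  obtain M where M: "\<And>m s. m \<ge> M \<Longrightarrow> s \<in> {0..1} \<Longrightarrow>
      inv\<^bsub>G\<^esub> (X s) \<otimes>\<^bsub>G\<^esub> Z (s / real m) [^]\<^bsub>G\<^esub> m \<in> Q"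
    using sum[unfolded Lie_sum_def, rule_format, OF compact_Icc conjI[OF Q]]
    unfolding eventually_sequentially Z_def by blast
  define S where "S = {s. X s \<in> P} \<inter> (\<Inter>k<M. {s. Z s [^]\<^bsub>G\<^esub> k \<in> P})"
  have "open S"
    unfolding S_def using P(1)
    by (intro open_Int open_INT finite_lessThan ballI)
      (auto dest: openin_continuous_map_preimage[OF continuous_map_Lie_set[OF L(1)]]
                  openin_continuous_map_preimage[OF continuous_map_topological_group_pow[OF tg Zcont]])
  moreover have "0 \<in> S" unfolding S_def using Lie_set_zero[OF tg L(1)] Z0 P(2) by simp
  ultimately obtain d where d: "d > 0" "ball 0 d \<subseteq> S" using open_contains_ball by blast
  show ?thesis
  proof (rule that[of "min d 1"])
    show "min d 1 > 0" using d by simp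
    fix t :: real and n k :: nat assume t: "0 \<le> t" "t < min d 1" and kn: "k \<le> n"
    have small: "s \<in> S" if "0 \<le> s" "s \<le> t" for s using d(2) that t by (auto simp: dist_real_def)
    have "\<exists>p\<in>P. \<exists>q\<in>Q. Z (t / real n) [^]\<^bsub>G\<^esub> k = p \<otimes>\<^bsub>G\<^esub> q"
    proof (cases "k < M")
      case True
      have "0 \<le> t / real n" "t / real n \<le> t"
        using t by (auto simp: divide_le_eq mult_le_cancel_left1 intro: mult_left_le)
      then have "Z (t / real n) [^]\<^bsub>G\<^esub> k \<in> P" using small True unfolding S_def by blast
      then show ?thesis using Q(2) Zc by (intro bexI) (auto simp del: Pi_I')
    next
      case False
      define s where "s = real k * t / real n"
      have s: "0 \<le> s" "s \<le> t"
        using t kn unfolding s_def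
        by (auto simp: divide_le_eq) (metis mult.commute mult_right_mono of_nat_mono)
      have "Z (s / real k) [^]\<^bsub>G\<^esub> k = Z (t / real n) [^]\<^bsub>G\<^esub> k"
        using kn by (cases "k = 0") (auto simp: s_def)
      moreover have "inv\<^bsub>G\<^esub> (X s) \<otimes>\<^bsub>G\<^esub> Z (s / real k) [^]\<^bsub>G\<^esub> k \<in> Q"
        using M False s t by simp
      moreover have "X s \<in> P" using small[OF s] unfolding S_def by blast
      ultimately show ?thesis
        using Xc Zc by (intro bexI[of _ "X s"] bexI) (auto simp: m_assoc[symmetric])
    qed
    then show "\<exists>p\<in>P. \<exists>q\<in>Q. (X1 (t / real n) \<otimes>\<^bsub>G\<^esub> X2 (t / real n)) [^]\<^bsub>G\<^esub> k = p \<otimes>\<^bsub>G\<^esub> q"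
      unfolding Z_def .
  qed
qed

section \<open>Representations and difference quotients\<close>

lemma rep_linear: "continuous_representation G TG \<pi> \<Longrightarrow> g \<in> carrier G \<Longrightarrow> linear (\<pi> g)"
  by (simp add: continuous_representation_def)

lemma rep_mult:
  "continuous_representation G TG \<pi> \<Longrightarrow> g \<in> carrier G \<Longrightarrow> h \<in> carrier G \<Longrightarrow>
    \<pi> (g \<otimes>\<^bsub>G\<^esub> h) v = \<pi> g (\<pi> h v)"
  by (simp add: continuous_representation_def)

lemma rep_one: "continuous_representation G TG \<pi> \<Longrightarrow> \<pi> \<one>\<^bsub>G\<^esub> v = v"
  by (simp add: continuous_representation_def)

lemma rep_tendsto:
  assumes "continuous_representation G TG \<pi>" "limitin TG g a F" "(v \<longlongrightarrow> u) F"
  shows "((\<lambda>x. \<pi> (g x) (v x)) \<longlongrightarrow> \<pi> a u) F"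
proof -
  have cm: "continuous_map (prod_topology TG euclidean) euclidean (\<lambda>(g, y). \<pi> g y)"
    using assms(1) by (simp add: continuous_representation_def)
  have "limitin (prod_topology TG euclidean) (\<lambda>x. (g x, v x)) (a, u) F"
    unfolding limitin_pairwise using assms(2,3) by (simp add: o_def)
  from continuous_map_limit[OF cm this] show ?thesis by (simp add: o_def)
qed

lemma continuous_map_rep_orbit:
  assumes "continuous_representation G TG \<pi>"
  shows "continuous_map TG euclidean (\<lambda>g. \<pi> g u)"
proof -
  have action: "continuous_map (prod_topology TG euclidean) euclidean (\<lambda>(g, y). \<pi> g y)"
    using assms by (simp add: continuous_representation_def)
  have "continuous_map TG (prod_topology TG euclidean) (\<lambda>g. (g, u))"
    by (intro continuous_map_pairedI) auto
  from continuous_map_compose[OF this action] show ?thesis by (simp add: o_def)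
qed

lemma openin_rep_orbit_diff:
  assumes "topological_vector_space_type TYPE('y::{real_vector,t2_space})"
    and "continuous_representation G TG (\<pi> :: 'g \<Rightarrow> 'y \<Rightarrow> 'y)" "open A"
  shows "openin TG {g \<in> topspace TG. \<pi> g u - u \<in> A}"
proof -
  from continuous_map_compose[OF continuous_map_rep_orbit[OF assms(2)]
      tvs_continuous_map_affine[OF assms(1), of 1 u]]
  have "continuous_map TG euclidean (\<lambda>g. \<pi> g u - u)" by (simp add: o_def)
  from openin_continuous_map_preimage[OF this, of A] assms(3) show ?thesis by simp
qed

lemma rep_pow_diff_sum:
  assumes rep: "continuous_representation G TG \<pi>" and "group G" "g \<in> carrier G"
  shows "\<pi> (g [^]\<^bsub>G\<^esub> (n::nat)) y - y = (\<Sum>k<n. \<pi> (g [^]\<^bsub>G\<^esub> k) (\<pi> g y - y))"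
proof (induction n)
  case 0
  then show ?case using rep_one[OF rep] by simp
next
  case (Suc n)
  interpret group G by (rule assms(2))
  have "linear (\<pi> (g [^]\<^bsub>G\<^esub> n))" using rep_linear[OF rep] assms(3) by simp
  then have "\<pi> (g [^]\<^bsub>G\<^esub> n) (\<pi> g y) - y = \<pi> (g [^]\<^bsub>G\<^esub> n) (\<pi> g y - y) + (\<pi> (g [^]\<^bsub>G\<^esub> n) y - y)"
    by (simp add: linear_diff)
  then show ?case using Suc.IH rep_mult[OF rep] assms(3) by simp
qed

lemma rep_pow_diff_quot_mean:
  assumes rep: "continuous_representation G TG \<pi>" and "group G" "g \<in> carrier G"
  shows "inverse (real n * r) *\<^sub>R (\<pi> (g [^]\<^bsub>G\<^esub> (n::nat)) y - y)
    = (1 / real n) *\<^sub>R (\<Sum>k<n. \<pi> (g [^]\<^bsub>G\<^esub> k) (inverse r *\<^sub>R (\<pi> g y - y)))"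
proof -
  interpret group G by (rule assms(2))
  have "linear (\<pi> (g [^]\<^bsub>G\<^esub> k))" for k :: nat
    using rep_linear[OF rep] assms(3) by simp
  then show ?thesis
    using rep_pow_diff_sum[OF assms]
    by (simp add: linear_scale scaleR_sum_right[symmetric] divide_inverse mult.commute)
qed

lemma mean_diff_in_convex:
  fixes a :: "nat \<Rightarrow> 'a::real_vector"
  assumes "convex W" "0 < n" "\<And>k. k < n \<Longrightarrow> a k - w \<in> W"
  shows "(1 / real n) *\<^sub>R (\<Sum>k<n. a k) - w \<in> W"
proof -
  have "(\<Sum>k<n. (1 / real n) *\<^sub>R (a k - w)) \<in> W"
    by (rule convex_sum[OF finite_lessThan assms(1)]) (use assms(2,3) in auto)
  then show ?thesis
    using assms(2) by (simp add: scaleR_diff_right sum_subtractf scaleR_sum_right sum_constant_scaleR)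
qed

lemma equicontinuous_familyE:
  assumes "equicontinuous_family (\<pi> ` V)" "open W" "0 \<in> W"
  obtains U where "open U" "0 \<in> U" "\<And>g u. g \<in> V \<Longrightarrow> u \<in> U \<Longrightarrow> \<pi> g u \<in> W"
  using assms unfolding equicontinuous_family_def by (metis image_eqI image_subset_iff)

lemma tendsto_dpi: "y \<in> gen_domain \<pi> X \<Longrightarrow> (diff_quot \<pi> X y \<longlongrightarrow> dpi \<pi> X y) (at 0)"
  unfolding gen_domain_def dpi_def using tendsto_Lim[OF trivial_limit_at] by auto

lemma diff_quot_mult_tendsto:
  assumes tg: "topological_group G TG"
    and tvs: "topological_vector_space_type TYPE('y::{real_vector,t2_space})"
    and rep: "continuous_representation G TG (\<pi> :: 'g \<Rightarrow> 'y \<Rightarrow> 'y)"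
    and X1: "continuous_map euclideanreal TG X1" "X1 0 = \<one>\<^bsub>G\<^esub>" and X2: "\<And>r. X2 r \<in> carrier G"
    and a: "(diff_quot \<pi> X1 y \<longlongrightarrow> a) (at 0)" and b: "(diff_quot \<pi> X2 y \<longlongrightarrow> b) (at 0)"
  shows "(diff_quot \<pi> (\<lambda>r. X1 r \<otimes>\<^bsub>G\<^esub> X2 r) y \<longlongrightarrow> a + b) (at 0)"
proof -
  have X1c: "X1 r \<in> carrier G" for r
    using X1(1) topspace_topological_group[OF tg] by (auto simp: continuous_map_def)
  have e: "diff_quot \<pi> (\<lambda>r. X1 r \<otimes>\<^bsub>G\<^esub> X2 r) y
      = (\<lambda>s. \<pi> (X1 s) (diff_quot \<pi> X2 y s) + diff_quot \<pi> X1 y s)"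
    unfolding fun_eq_iff using rep_mult[OF rep X1c X2] rep_linear[OF rep X1c]
    by (simp add: diff_quot_def linear_scale linear_diff scaleR_right_diff_distrib)
  have "limitin TG X1 \<one>\<^bsub>G\<^esub> (at 0)"
    using continuous_map_limit[OF X1(1), of "\<lambda>s. s" 0 "at (0::real)"] X1(2)
    by (simp add: o_def tendsto_ident_at)
  then have "((\<lambda>s. \<pi> (X1 s) (diff_quot \<pi> X2 y s)) \<longlongrightarrow> b) (at 0)"
    using rep_tendsto[OF rep _ b] rep_one[OF rep] by metis
  from tvs_tendsto_add[OF tvs this a] show ?thesis
    unfolding e by (simp only: add.commute[of a b])
qed

lemma Lie_sum_rep_tendsto:
  assumes tg: "topological_group G TG" and rep: "continuous_representation G TG \<pi>"
    and L: "X \<in> Lie_set G TG" "X1 \<in> Lie_set G TG" "X2 \<in> Lie_set G TG"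
    and sum: "Lie_sum G TG X X1 X2"
  shows "((\<lambda>n. \<pi> ((X1 (t / real n) \<otimes>\<^bsub>G\<^esub> X2 (t / real n)) [^]\<^bsub>G\<^esub> n) y) \<longlongrightarrow> \<pi> (X t) y) sequentially"
proof -
  interpret group G using tg by (rule topological_group_group)
  define h where
    "h n = inv\<^bsub>G\<^esub> (X t) \<otimes>\<^bsub>G\<^esub> ((X1 (t / real n) \<otimes>\<^bsub>G\<^esub> X2 (t / real n)) [^]\<^bsub>G\<^esub> n)" for n
  have Xc: "X t \<in> carrier G" using Lie_set_carrier[OF tg L(1)] .
  have pc: "(X1 (t / real n) \<otimes>\<^bsub>G\<^esub> X2 (t / real n)) [^]\<^bsub>G\<^esub> n \<in> carrier G" for n :: nat
    using Lie_set_carrier[OF tg] L by simp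
  have hc: "h n \<in> carrier G" for n unfolding h_def using Xc pc by simp
  have "(X1 (t / real n) \<otimes>\<^bsub>G\<^esub> X2 (t / real n)) [^]\<^bsub>G\<^esub> n = X t \<otimes>\<^bsub>G\<^esub> h n" for n
    unfolding h_def using Xc pc[of n] by (simp add: m_assoc[symmetric])
  then have eq: "\<pi> ((X1 (t / real n) \<otimes>\<^bsub>G\<^esub> X2 (t / real n)) [^]\<^bsub>G\<^esub> n) y = \<pi> (X t) (\<pi> (h n) y)" for n
    using rep_mult[OF rep Xc hc] by simp
  show ?thesis unfolding eq
  proof (rule rep_tendsto[OF rep])
    show "limitin TG (\<lambda>n. X t) (X t) sequentially"
      using Xc topspace_topological_group[OF tg] by simp
    show "((\<lambda>n. \<pi> (h n) y) \<longlongrightarrow> y) sequentially"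
      using rep_tendsto[OF rep Lie_sum_limitin[OF tg sum] tendsto_const] rep_one[OF rep]
      unfolding h_def by simp
  qed
qed

section \<open>Additivity of the generator\<close>

lemma equicontinuous_rep_small_motion:
  assumes tg: "topological_group G TG"
    and tvs: "topological_vector_space_type TYPE('y::{real_vector,t2_space})"
    and rep: "continuous_representation G TG (\<pi> :: 'g \<Rightarrow> 'y \<Rightarrow> 'y)"
    and V: "openin TG V" "\<one>\<^bsub>G\<^esub> \<in> V" "equicontinuous_family (\<pi> ` V)"
    and W: "open W" "0 \<in> W"
  obtains P Q U where "openin TG P" "\<one>\<^bsub>G\<^esub> \<in> P" "openin TG Q" "\<one>\<^bsub>G\<^esub> \<in> Q" "open U" "0 \<in> U"
    "\<And>p q v. p \<in> P \<Longrightarrow> q \<in> Q \<Longrightarrow> v - w \<in> U \<Longrightarrow> \<pi> (p \<otimes>\<^bsub>G\<^esub> q) v - w \<in> W"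
proof -
  obtain W1 where W1: "open W1" "0 \<in> W1" "\<And>u v. u \<in> W1 \<Longrightarrow> v \<in> W1 \<Longrightarrow> u + v \<in> W \<and> u - v \<in> W"
    using tvs_zero_nhd_half[OF tvs W] by blast
  obtain W2 where W2: "open W2" "0 \<in> W2" "\<And>u v. u \<in> W2 \<Longrightarrow> v \<in> W2 \<Longrightarrow> u + v \<in> W1 \<and> u - v \<in> W1"
    using tvs_zero_nhd_half[OF tvs W1(1,2)] by blast
  obtain U1 where U1: "open U1" "0 \<in> U1" "\<And>g u. g \<in> V \<Longrightarrow> u \<in> U1 \<Longrightarrow> \<pi> g u \<in> W1"
    using equicontinuous_familyE[OF V(3) W1(1,2)] by blast
  obtain U where U: "open U" "0 \<in> U" "\<And>g u. g \<in> V \<Longrightarrow> u \<in> U \<Longrightarrow> \<pi> g u \<in> U1"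
    using equicontinuous_familyE[OF V(3) U1(1,2)] by blast
  obtain U3 where U3: "open U3" "0 \<in> U3" "\<And>g u. g \<in> V \<Longrightarrow> u \<in> U3 \<Longrightarrow> \<pi> g u \<in> W2"
    using equicontinuous_familyE[OF V(3) W2(1,2)] by blast
  define P where "P = V \<inter> {g \<in> topspace TG. \<pi> g w - w \<in> W2}"
  define Q where "Q = V \<inter> {g \<in> topspace TG. \<pi> g w - w \<in> U3}"
  show ?thesis
  proof (rule that[of P Q U])
    show "openin TG P" "openin TG Q"
      unfolding P_def Q_def using openin_rep_orbit_diff[OF tvs rep] W2(1) U3(1) V(1) by blast+
    show "\<one>\<^bsub>G\<^esub> \<in> P" "\<one>\<^bsub>G\<^esub> \<in> Q"
      unfolding P_def Q_def using V(2) openin_subset[OF V(1)] rep_one[OF rep] W2(2) U3(2) by auto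
    show "open U" "0 \<in> U" using U(1,2) .
    fix p q v assume p: "p \<in> P" and q: "q \<in> Q" and v: "v - w \<in> U"
    have pc: "p \<in> carrier G" and qc: "q \<in> carrier G"
      using p q topspace_topological_group[OF tg] unfolding P_def Q_def by auto
    have eq: "\<pi> (p \<otimes>\<^bsub>G\<^esub> q) v - w = \<pi> p (\<pi> q (v - w)) + (\<pi> p (\<pi> q w - w) + (\<pi> p w - w))"
      using rep_mult[OF rep pc qc] rep_linear[OF rep pc] rep_linear[OF rep qc]
      by (simp add: linear_diff)
    have "\<pi> p (\<pi> q (v - w)) \<in> W1" using U1(3) U(3) p q v unfolding P_def Q_def by blast
    moreover have "\<pi> p (\<pi> q w - w) + (\<pi> p w - w) \<in> W1"
      using W2(3) U3(3) p q unfolding P_def Q_def by blast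
    ultimately show "\<pi> (p \<otimes>\<^bsub>G\<^esub> q) v - w \<in> W" unfolding eq using W1(3) by blast
  qed
qed

lemma Lie_sum_diff_quot_near:
  assumes tg: "topological_group G TG"
    and tvs: "topological_vector_space_type TYPE('y::{real_vector,t2_space})"
    and rep: "continuous_representation G TG (\<pi> :: 'g \<Rightarrow> 'y \<Rightarrow> 'y)"
    and V: "openin TG V" "\<one>\<^bsub>G\<^esub> \<in> V" "equicontinuous_family (\<pi> ` V)"
    and L: "X \<in> Lie_set G TG" "X1 \<in> Lie_set G TG" "X2 \<in> Lie_set G TG"
    and sum: "Lie_sum G TG X X1 X2"
    and dZ: "(diff_quot \<pi> (\<lambda>r. X1 r \<otimes>\<^bsub>G\<^esub> X2 r) y \<longlongrightarrow> w) (at 0)"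
    and W: "open W" "convex W" "0 \<in> W"
  shows "\<forall>\<^sub>F t in at_right 0. diff_quot \<pi> X y t - w \<in> closure W"
proof -
  interpret group G using tg by (rule topological_group_group)
  define Z where "Z r = X1 r \<otimes>\<^bsub>G\<^esub> X2 r" for r
  have Zc: "Z r \<in> carrier G" for r unfolding Z_def using Lie_set_carrier[OF tg] L by blast
  obtain P Q U where PQ: "openin TG P" "\<one>\<^bsub>G\<^esub> \<in> P" "openin TG Q" "\<one>\<^bsub>G\<^esub> \<in> Q"
    and U: "open U" "0 \<in> U"
    and move: "\<And>p q v. p \<in> P \<Longrightarrow> q \<in> Q \<Longrightarrow> v - w \<in> U \<Longrightarrow> \<pi> (p \<otimes>\<^bsub>G\<^esub> q) v - w \<in> W"
    using equicontinuous_rep_small_motion[OF tg tvs rep V W(1,3)] by blast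
  obtain \<delta> where \<delta>: "\<delta> > 0"
    and factor: "\<And>t n k. 0 \<le> t \<Longrightarrow> t < \<delta> \<Longrightarrow> k \<le> n \<Longrightarrow>
      \<exists>p\<in>P. \<exists>q\<in>Q. Z (t / real n) [^]\<^bsub>G\<^esub> k = p \<otimes>\<^bsub>G\<^esub> q"
    using Lie_sum_pow_factor[OF tg L sum PQ] unfolding Z_def by blast
  obtain d where d: "d > 0" "\<And>r. r \<noteq> 0 \<Longrightarrow> \<bar>r\<bar> < d \<Longrightarrow> diff_quot \<pi> Z y r - w \<in> U"
    using tvs_eventually_diff_in[OF tvs dZ U] unfolding eventually_at Z_def[abs_def]
    by (auto simp: dist_real_def)
  have "diff_quot \<pi> X y t - w \<in> closure W" if t: "0 < t" "t < \<delta>" "t < d" for t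
  proof (rule Lim_in_closed_set[OF closed_closure _ trivial_limit_sequentially])
    define A where "A n = inverse t *\<^sub>R (\<pi> (Z (t / real n) [^]\<^bsub>G\<^esub> n) y - y)" for n
    have An: "A n - w \<in> W" if n: "0 < n" for n
    proof -
      have "A n = (1 / real n) *\<^sub>R (\<Sum>k<n. \<pi> (Z (t / real n) [^]\<^bsub>G\<^esub> k) (diff_quot \<pi> Z y (t / real n)))"
        using rep_pow_diff_quot_mean[OF rep is_group Zc, where n=n and r="t / real n" and y=y] n
        unfolding A_def diff_quot_def by simp
      moreover have "\<pi> (Z (t / real n) [^]\<^bsub>G\<^esub> k) (diff_quot \<pi> Z y (t / real n)) - w \<in> W" if "k < n" for k
      proof -
        have "t / real n \<le> t"
          using t n by (auto simp: divide_le_eq mult_le_cancel_left1)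
        then have "diff_quot \<pi> Z y (t / real n) - w \<in> U"
          using d(2)[of "t / real n"] t n by simp
        then show ?thesis using factor[of t k n] move t that by fastforce
      qed
      ultimately show ?thesis using mean_diff_in_convex[OF W(2) n] by simp
    qed
    show "\<forall>\<^sub>F n in sequentially. A n - w \<in> closure W"
    proof (rule eventually_mono[OF eventually_gt_at_top[of 0]])
      show "A n - w \<in> closure W" if "0 < n" for n
        using An[OF that] closure_subset by blast
    qed
    have "(A \<longlongrightarrow> inverse t *\<^sub>R (\<pi> (X t) y - y)) sequentially"
      unfolding A_def Z_def
      by (intro tvs_tendsto_scaleR[OF tvs] tvs_tendsto_diff[OF tvs] tendsto_const
          Lie_sum_rep_tendsto[OF tg rep L sum])
    then show "((\<lambda>n. A n - w) \<longlongrightarrow> diff_quot \<pi> X y t - w) sequentially"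
      unfolding diff_quot_def by (rule tvs_tendsto_diff[OF tvs _ tendsto_const])
  qed
  then show ?thesis
    unfolding eventually_at_right_field using \<delta> d(1) by (intro exI[of _ "min \<delta> d"]) auto
qed

lemma dpi_Lie_sum:
  assumes tg: "topological_group G TG"
    and tvs: "topological_vector_space_type TYPE('y::{real_vector,t2_space})"
    and lc: "locally_convex_type TYPE('y)"
    and rep: "continuous_representation G TG (\<pi> :: 'g \<Rightarrow> 'y \<Rightarrow> 'y)"
    and V: "openin TG V" "\<one>\<^bsub>G\<^esub> \<in> V" "equicontinuous_family (\<pi> ` V)"
    and y: "y \<in> D1 G TG \<pi>"
    and L: "X \<in> Lie_set G TG" "X1 \<in> Lie_set G TG" "X2 \<in> Lie_set G TG"
    and sum: "Lie_sum G TG X X1 X2"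
  shows "dpi \<pi> X y = dpi \<pi> X1 y + dpi \<pi> X2 y"
proof -
  define w where "w = dpi \<pi> X1 y + dpi \<pi> X2 y"
  have dom: "y \<in> gen_domain \<pi> X" "y \<in> gen_domain \<pi> X1" "y \<in> gen_domain \<pi> X2"
    using y L unfolding D1_def by auto
  have "(diff_quot \<pi> (\<lambda>r. X1 r \<otimes>\<^bsub>G\<^esub> X2 r) y \<longlongrightarrow> w) (at 0)"
    unfolding w_def
    by (rule diff_quot_mult_tendsto[OF tg tvs rep continuous_map_Lie_set[OF L(2)]
          Lie_set_zero[OF tg L(2)] Lie_set_carrier[OF tg L(3)] tendsto_dpi[OF dom(2)]
          tendsto_dpi[OF dom(3)]])
  note near = Lie_sum_diff_quot_near[OF tg tvs rep V L sum this]
  have "((\<lambda>t. diff_quot \<pi> X y t - w) \<longlongrightarrow> dpi \<pi> X y - w) (at_right 0)"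
    using tendsto_mono[OF at_le[OF subset_UNIV] tendsto_dpi[OF dom(1)]]
    by (rule tvs_tendsto_diff[OF tvs _ tendsto_const])
  then have "dpi \<pi> X y - w \<in> closure W" if "open W" "convex W" "0 \<in> W" for W
    using Lim_in_closed_set[OF closed_closure near[OF that]] by simp
  then have "dpi \<pi> X y - w = 0" by (rule tvs_eq_zero_if_in_closure_convex_nhds[OF tvs lc])
  then show ?thesis by (simp add: w_def)
qed

lemma D1_eq_D1_lin:
  assumes "topological_group G TG"
    and "topological_vector_space_type TYPE('y::{real_vector,t2_space})"
    and "locally_convex_type TYPE('y)"
    and "continuous_representation G TG (\<pi> :: 'g \<Rightarrow> 'y \<Rightarrow> 'y)"
    and "openin TG V" "\<one>\<^bsub>G\<^esub> \<in> V" "equicontinuous_family (\<pi> ` V)"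
  shows "D1 G TG \<pi> = D1_lin G TG \<pi>"
  using dpi_Lie_sum[OF assms] unfolding D1_lin_def by blast

section \<open>Continuity of the generator\<close>

lemma Lie_set_one: "topological_group G TG \<Longrightarrow> (\<lambda>_. \<one>\<^bsub>G\<^esub>) \<in> Lie_set G TG"
  unfolding Lie_set_def topological_group_def by (simp add: group.is_monoid monoid.one_closed)

lemma continuous_map_Lie_eval:
  assumes tg: "topological_group G TG" and TL: "topspace TL = Lie_set G TG"
    and fin: "finer_than_compact_open G TG TL"
  shows "continuous_map TL TG (\<lambda>X. X q)"
  unfolding continuous_map_def
proof (intro conjI allI impI)
  show "(\<lambda>X. X q) \<in> topspace TL \<rightarrow> topspace TG"
    using Lie_set_carrier[OF tg] TL topspace_topological_group[OF tg] by auto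
  fix U assume "openin TG U"
  then have "openin TL {X \<in> Lie_set G TG. X ` {q} \<subseteq> U}"
    using fin unfolding finer_than_compact_open_def by (meson compact_sing)
  moreover have "{X \<in> Lie_set G TG. X ` {q} \<subseteq> U} = {X \<in> topspace TL. X q \<in> U}" using TL by auto
  ultimately show "openin TL {X \<in> topspace TL. X q \<in> U}" by simp
qed

lemma continuous_map_diff_quot:
  assumes tg: "topological_group G TG"
    and tvs: "topological_vector_space_type TYPE('y::{real_vector,t2_space})"
    and rep: "continuous_representation G TG (\<pi> :: 'g \<Rightarrow> 'y \<Rightarrow> 'y)"
    and TL: "topspace TL = Lie_set G TG" and fin: "finer_than_compact_open G TG TL"
  shows "continuous_map TL euclidean (\<lambda>X. diff_quot \<pi> X y q)"
proof -
  from continuous_map_compose[OF continuous_map_compose[OF continuous_map_Lie_eval[OF tg TL fin]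
      continuous_map_rep_orbit[OF rep]]
      tvs_continuous_map_affine[OF tvs, of "inverse q" y]]
  show ?thesis by (simp add: o_def diff_quot_def)
qed

lemma Baire_space_closedin_cover:
  assumes "Baire_space T" "topspace T \<noteq> {}"
    and "\<And>n::nat. closedin T (F n)" "topspace T \<subseteq> (\<Union>n. F n)"
  obtains n where "T interior_of F n \<noteq> {}"
proof (rule ccontr)
  assume "\<not> thesis"
  then have empty: "T interior_of F n = {}" for n using that by blast
  define \<U> where "\<U> = range (\<lambda>n. topspace T - F n)"
  have "countable \<U>" unfolding \<U>_def by simp
  moreover have "\<forall>U\<in>\<U>. openin T U \<and> T closure_of U = topspace T"
    unfolding \<U>_def using assms(3) empty by (auto simp: closure_of_complement)
  ultimately have "T closure_of (topspace T \<inter> \<Inter>\<U>) = topspace T"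
    using assms(1) unfolding Baire_space_def by blast
  moreover have "topspace T \<inter> \<Inter>\<U> = {}" unfolding \<U>_def using assms(4) by blast
  ultimately show False using assms(2) by simp
qed

text \<open>The closed sets \<open>F\<^sub>N\<close>, on which the sequence stays close to its \<open>N\<close>-th term from \<open>N\<close> on,
  cover the space.\<close>

lemma Baire_pointwise_limit_small_oscillation:
  fixes f :: "'a \<Rightarrow> 'y::{real_vector,t2_space}" and fn :: "nat \<Rightarrow> 'a \<Rightarrow> 'y"
  assumes tvs: "topological_vector_space_type TYPE('y)"
    and Baire: "Baire_space T" "topspace T \<noteq> {}"
    and fn: "\<And>n. continuous_map T euclidean (fn n)"
    and lim: "\<And>x. x \<in> topspace T \<Longrightarrow> ((\<lambda>n. fn n x) \<longlongrightarrow> f x) sequentially"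
    and W: "open W" "0 \<in> W"
  obtains x0 N where "openin T N" "x0 \<in> N" "\<And>x. x \<in> N \<Longrightarrow> f x - f x0 \<in> W"
proof -
  obtain B1 where B1: "open B1" "0 \<in> B1" "\<And>u v. u \<in> B1 \<Longrightarrow> v \<in> B1 \<Longrightarrow> u + v \<in> W \<and> u - v \<in> W"
    using tvs_zero_nhd_half[OF tvs W] by blast
  obtain B2 where B2: "open B2" "0 \<in> B2" "\<And>u v. u \<in> B2 \<Longrightarrow> v \<in> B2 \<Longrightarrow> u + v \<in> B1 \<and> u - v \<in> B1"
    using tvs_zero_nhd_half[OF tvs B1(1,2)] by blast
  obtain B where B: "open B" "0 \<in> B" "closure B \<subseteq> B2"
    using tvs_zero_nhd_closure[OF tvs B2(1,2)] by blast
  define F where "F N = (\<Inter>m\<in>{N..}. {x \<in> topspace T. fn m x - fn N x \<in> closure B})" for N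
  have "closedin T (F N)" for N
    unfolding F_def
    by (intro closedin_INT)
      (auto intro!: closedin_continuous_map_preimage[OF tvs_continuous_map_diff[OF tvs fn fn]])
  moreover have "topspace T \<subseteq> (\<Union>N. F N)"
  proof
    fix x assume x: "x \<in> topspace T"
    obtain N where "\<And>m. m \<ge> N \<Longrightarrow> fn m x - fn N x \<in> B"
      using tvs_tendsto_tail_close[OF tvs lim[OF x] B(1,2)] by blast
    then show "x \<in> (\<Union>N. F N)" using x closure_subset unfolding F_def by blast
  qed
  ultimately obtain N where "T interior_of F N \<noteq> {}"
    using Baire_space_closedin_cover[OF Baire] by metis
  then obtain x0 where x0: "x0 \<in> T interior_of F N" by blast
  define S where "S = T interior_of F N"
  have SF: "S \<subseteq> F N" unfolding S_def by (rule interior_of_subset)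
  have near: "f x - fn N x \<in> closure B" if "x \<in> S" for x
  proof (rule Lim_in_closed_set[OF closed_closure _ trivial_limit_sequentially])
    show "\<forall>\<^sub>F m in sequentially. fn m x - fn N x \<in> closure B"
      using that SF unfolding eventually_sequentially F_def by blast
    show "((\<lambda>m. fn m x - fn N x) \<longlongrightarrow> f x - fn N x) sequentially"
      using tvs_tendsto_diff[OF tvs lim tendsto_const] that SF unfolding F_def by blast
  qed
  define N0 where "N0 = S \<inter> {x \<in> topspace T. fn N x - fn N x0 \<in> B}"
  show ?thesis
  proof (rule that[of N0 x0])
    have "continuous_map T euclidean (\<lambda>x. fn N x - fn N x0)"
      using tvs_continuous_map_diff[OF tvs fn[of N], of "\<lambda>_. fn N x0"] by simp
    then have "openin T {x \<in> topspace T. fn N x - fn N x0 \<in> B}"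
      by (rule openin_continuous_map_preimage) (simp add: B(1))
    then show "openin T N0" unfolding N0_def S_def by (intro openin_Int openin_interior_of)
    show "x0 \<in> N0" unfolding N0_def S_def using x0 B(2) interior_of_subset_topspace by fastforce
    fix x assume x: "x \<in> N0"
    have "(f x - fn N x) + (fn N x - fn N x0) \<in> B1"
      using B2(3) near x B(3) closure_subset unfolding N0_def by blast
    moreover have "f x0 - fn N x0 \<in> B1"
      using B2(3)[of _ 0] near x0 B(3) B2(2) unfolding S_def by auto
    ultimately have "((f x - fn N x) + (fn N x - fn N x0)) - (f x0 - fn N x0) \<in> W"
      using B1(3) by blast
    then show "f x - f x0 \<in> W" by simp
  qed
qed

lemma continuous_map_if_small_oscillation_homogeneous:
  fixes f :: "'a \<Rightarrow> 'y::{real_vector,t2_space}"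
  assumes tvs: "topological_vector_space_type TYPE('y)"
    and osc: "\<And>W. open W \<Longrightarrow> 0 \<in> W \<Longrightarrow> \<exists>x0 N. openin T N \<and> x0 \<in> N \<and> (\<forall>x\<in>N. f x - f x0 \<in> W)"
    and hom: "\<And>x0 x1. x0 \<in> topspace T \<Longrightarrow> x1 \<in> topspace T \<Longrightarrow>
      \<exists>\<tau>. continuous_map T T \<tau> \<and> \<tau> x1 = x0 \<and> (\<forall>x\<in>topspace T. f (\<tau> x) - f x0 = f x - f x1)"
  shows "continuous_map T euclidean f"
  unfolding continuous_map_def
proof (intro conjI allI impI)
  show "f \<in> topspace T \<rightarrow> topspace euclidean" by simp
  fix U :: "'y set" assume "openin euclidean U"
  then have U: "open U" by simp
  show "openin T {x \<in> topspace T. f x \<in> U}"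
  proof (subst openin_subopen, intro ballI)
    fix x1 assume x1: "x1 \<in> {x \<in> topspace T. f x \<in> U}"
    have "open {v. 1 *\<^sub>R (v - (- f x1)) \<in> U}" by (rule tvs_open_vimage_affine[OF tvs U])
    then have "open {v. v + f x1 \<in> U}" by simp
    moreover have "0 \<in> {v. v + f x1 \<in> U}" using x1 by simp
    ultimately have "\<exists>x0 N. openin T N \<and> x0 \<in> N \<and> (\<forall>x\<in>N. f x - f x0 \<in> {v. v + f x1 \<in> U})"
      by (rule osc)
    then obtain x0 N where N: "openin T N" "x0 \<in> N" "\<forall>x\<in>N. f x - f x0 + f x1 \<in> U"
      by auto
    have "x0 \<in> topspace T" "x1 \<in> topspace T" using openin_subset[OF N(1)] N(2) x1 by auto
    from hom[OF this] obtain \<tau> where \<tau>: "continuous_map T T \<tau>" "\<tau> x1 = x0"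
        "\<forall>x\<in>topspace T. f (\<tau> x) - f x0 = f x - f x1"
      by blast
    show "\<exists>N'. openin T N' \<and> x1 \<in> N' \<and> N' \<subseteq> {x \<in> topspace T. f x \<in> U}"
    proof (intro exI conjI)
      show "openin T {x \<in> topspace T. \<tau> x \<in> N}"
        using openin_continuous_map_preimage[OF \<tau>(1) N(1)] .
      show "x1 \<in> {x \<in> topspace T. \<tau> x \<in> N}" using x1 \<tau>(2) N(2) by simp
      show "{x \<in> topspace T. \<tau> x \<in> N} \<subseteq> {x \<in> topspace T. f x \<in> U}"
      proof (intro subsetI CollectI conjI)
        fix x assume x: "x \<in> {x \<in> topspace T. \<tau> x \<in> N}"
        then show "x \<in> topspace T" by simp
        have "f (\<tau> x) - f x0 + f x1 \<in> U" "f (\<tau> x) - f x0 = f x - f x1"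
          using N(3) \<tau>(3) x by blast+
        then show "f x \<in> U" by simp
      qed
    qed
  qed
qed

lemma Lie_tvs_translation:
  fixes f :: "(real \<Rightarrow> 'g) \<Rightarrow> 'a::ab_group_add"
  assumes LT: "Lie_tvs G TG TL"
    and add: "\<And>A B. A \<in> topspace TL \<Longrightarrow> B \<in> topspace TL \<Longrightarrow> f (Lie_add G TG A B) = f A + f B"
    and X0: "X0 \<in> topspace TL" and X1: "X1 \<in> topspace TL"
  shows "\<exists>\<tau>. continuous_map TL TL \<tau> \<and> \<tau> X1 = X0 \<and> (\<forall>X\<in>topspace TL. f (\<tau> X) - f X0 = f X - f X1)"
proof -
  let ?add = "Lie_add G TG" and ?neg = "Lie_smult (-1)"
  have L: "topspace TL = Lie_set G TG"
    and closed: "\<And>X Y. X \<in> topspace TL \<Longrightarrow> Y \<in> topspace TL \<Longrightarrow> ?add X Y \<in> topspace TL"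
      "\<And>X. X \<in> topspace TL \<Longrightarrow> ?neg X \<in> topspace TL"
    and assoc: "\<And>X Y Z. X \<in> topspace TL \<Longrightarrow> Y \<in> topspace TL \<Longrightarrow> Z \<in> topspace TL \<Longrightarrow>
      ?add (?add X Y) Z = ?add X (?add Y Z)"
    and zero: "\<And>X. X \<in> topspace TL \<Longrightarrow> ?add (\<lambda>_. \<one>\<^bsub>G\<^esub>) X = X"
    and inverse: "\<And>X. X \<in> topspace TL \<Longrightarrow> ?add X (?neg X) = (\<lambda>_. \<one>\<^bsub>G\<^esub>)"
    and cont: "continuous_map (prod_topology TL TL) TL (\<lambda>(X, Y). ?add X Y)"
    using LT unfolding Lie_tvs_def Let_def by blast+
  define K where "K = ?add (?neg X1) X0"
  have K: "K \<in> topspace TL" unfolding K_def using closed X0 X1 by blast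
  show ?thesis
  proof (intro exI conjI ballI)
    have "continuous_map TL (prod_topology TL TL) (\<lambda>X. (X, K))"
      using K by (intro continuous_map_pairedI) auto
    from continuous_map_compose[OF this cont] show "continuous_map TL TL (\<lambda>X. ?add X K)"
      by (simp add: o_def)
    show "?add X1 K = X0"
      unfolding K_def using assoc[OF X1 closed(2)[OF X1] X0] inverse[OF X1] zero[OF X0] by simp
    then have "f X0 = f X1 + f K" using add[OF X1 K] by simp
    then show "f (?add X K) - f X0 = f X - f X1" if "X \<in> topspace TL" for X
      using add[OF that K] by simp
  qed
qed

lemma continuous_map_dpi:
  assumes tg: "topological_group G TG"
    and tvs: "topological_vector_space_type TYPE('y::{real_vector,t2_space})"
    and lc: "locally_convex_type TYPE('y)"
    and rep: "continuous_representation G TG (\<pi> :: 'g \<Rightarrow> 'y \<Rightarrow> 'y)"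
    and V: "openin TG V" "\<one>\<^bsub>G\<^esub> \<in> V" "equicontinuous_family (\<pi> ` V)"
    and y: "y \<in> D1 G TG \<pi>"
    and TL: "topspace TL = Lie_set G TG" "Baire_space TL" "finer_than_compact_open G TG TL"
    and sums: "\<forall>X1\<in>Lie_set G TG. \<forall>X2\<in>Lie_set G TG. \<exists>X\<in>Lie_set G TG. Lie_sum G TG X X1 X2"
    and LT: "Lie_tvs G TG TL"
  shows "continuous_map TL euclidean (\<lambda>X. dpi \<pi> X y)"
proof (rule continuous_map_if_small_oscillation_homogeneous[OF tvs])
  fix W :: "'y set" assume W: "open W" "0 \<in> W"
  have lim: "((\<lambda>n. diff_quot \<pi> X y (inverse (real (Suc n)))) \<longlongrightarrow> dpi \<pi> X y) sequentially"
    if "X \<in> topspace TL" for X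
  proof -
    have "filterlim (\<lambda>n. inverse (real (Suc n))) (at_right 0) sequentially"
      by (rule tendsto_imp_filterlim_at_right[OF LIMSEQ_inverse_real_of_nat]) simp
    then have "filterlim (\<lambda>n. inverse (real (Suc n))) (at 0) sequentially"
      by (rule filterlim_mono[OF _ at_le[OF subset_UNIV] order_refl])
    moreover have "y \<in> gen_domain \<pi> X" using y that TL(1) unfolding D1_def by blast
    ultimately show ?thesis by (intro filterlim_compose[OF tendsto_dpi])
  qed
  have "topspace TL \<noteq> {}" using Lie_set_one[OF tg] TL(1) by auto
  from Baire_pointwise_limit_small_oscillation[OF tvs TL(2) this
      continuous_map_diff_quot[OF tg tvs rep TL(1,3)] lim W]
  obtain X0 N where "openin TL N" "X0 \<in> N" "\<And>X. X \<in> N \<Longrightarrow> dpi \<pi> X y - dpi \<pi> X0 y \<in> W"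
    by blast
  then show "\<exists>X0 N. openin TL N \<and> X0 \<in> N \<and> (\<forall>X\<in>N. dpi \<pi> X y - dpi \<pi> X0 y \<in> W)"
    by blast
next
  have "dpi \<pi> (Lie_add G TG A B) y = dpi \<pi> A y + dpi \<pi> B y"
    if "A \<in> topspace TL" "B \<in> topspace TL" for A B
  proof -
    have A: "A \<in> Lie_set G TG" and B: "B \<in> Lie_set G TG" using that TL(1) by auto
    with sums have "\<exists>X\<in>Lie_set G TG. Lie_sum G TG X A B" by blast
    from Lie_add[OF tg A B this] show ?thesis by (intro dpi_Lie_sum[OF tg tvs lc rep V y _ A B])
  qed
  then show "\<exists>\<tau>. continuous_map TL TL \<tau> \<and> \<tau> X1 = X0 \<and>
      (\<forall>X\<in>topspace TL. dpi \<pi> (\<tau> X) y - dpi \<pi> X0 y = dpi \<pi> X y - dpi \<pi> X1 y)"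
    if "X0 \<in> topspace TL" "X1 \<in> topspace TL" for X0 X1
    by (rule Lie_tvs_translation[OF LT _ that])
qed

theorem theorem3p5:
  fixes G :: "('g, 'm) monoid_scheme" and TG :: "'g topology"
    and \<pi> :: "'g \<Rightarrow> 'y::{real_vector, t2_space} \<Rightarrow> 'y"
  assumes "topological_group G TG"
    and "topological_vector_space_type TYPE('y)"
    and "locally_convex_type TYPE('y)"
    and "continuous_representation G TG \<pi>"
    and "\<exists>V. openin TG V \<and> \<one>\<^bsub>G\<^esub> \<in> V \<and> equicontinuous_family (\<pi> ` V)"
  shows "D1 G TG \<pi> = D1_lin G TG \<pi> \<and>
    (\<forall>TL :: (real \<Rightarrow> 'g) topology.
        topspace TL = Lie_set G TG \<and> Baire_space TL \<and> finer_than_compact_open G TG TL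
      \<and> (\<forall>X1\<in>Lie_set G TG. \<forall>X2\<in>Lie_set G TG. \<exists>X\<in>Lie_set G TG. Lie_sum G TG X X1 X2)
      \<and> Lie_tvs G TG TL
      \<and> metrizable_space (euclidean :: 'y topology)
      \<longrightarrow> D1 G TG \<pi> = D1_cont G TG TL \<pi>)"
proof -
  obtain V where V: "openin TG V" "\<one>\<^bsub>G\<^esub> \<in> V" "equicontinuous_family (\<pi> ` V)"
    using assms(5) by blast
  have "D1 G TG \<pi> = D1_cont G TG TL \<pi>"
    if "topspace TL = Lie_set G TG" "Baire_space TL" "finer_than_compact_open G TG TL"
      "\<forall>X1\<in>Lie_set G TG. \<forall>X2\<in>Lie_set G TG. \<exists>X\<in>Lie_set G TG. Lie_sum G TG X X1 X2"
      "Lie_tvs G TG TL"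
    for TL
    using continuous_map_dpi[OF assms(1-4) V _ that] unfolding D1_cont_def by blast
  then show ?thesis using D1_eq_D1_lin[OF assms(1-4) V] by simp
qed

end
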